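(* For every $N\ge1$, the symmetric matrix $$\bar A*\hat{\mathcal{H}}'+\frac{1}{\max(N-1,1)}\big(N\bar A'-\bar A\big)*(\hat{\mathcal{H}}''-\hat{\mathcal{H}}')$$ is positive semi-definite.
   Context: Fix layer widths $C_0,\dots,C_L$ and a mini-batch size $N\ge1$. For $l=1,\dots,L$, let $\bar a_{l-1}\in\mathbb{R}^{(C_{l-1}+1)\times N}$ be square-integrable random matrices (activations with a row of ones appended). For each $n\in\{1,\dots,N\}$ and $l\in\{1,\dots,L\}$, let $g^{(n)}_l\in\mathbb{R}^{C_l\times N}$ be square-integrable random matrices. Here $(g^{(n)}_l)_{a,m}$ stands for the gradient $\partial\mathcal{L}_n/\partial(h_l)_{a,m}$ of the $n$-th example's loss with respect to the pre-activation entry $(a,m)$ of layer $l$. $\mathbb{E}$ denotes expectation, and $\mathbb{E}_n[\cdot]=\frac1N\sum_{n=1}^N[\cdot]$. Define block matrices, with $\{M\}_{l,l'}$ denoting block $(l,l')$, by: - $(\{\bar A\}_{l,l'})_{b,d}=\mathbb{E}\big[\mathbb{E}_n[(\bar a_{l-1})_{b,n}(\bar a_{l'-1})_{d,n}]\big]$; - $(\{\bar A'\}_{l,l'})_{b,d}=\mathbb{E}\big[\mathbb{E}_n[(\bar a_{l-1})_{b,n}]\,\mathbb{E}_n[(\bar a_{l'-1})_{d,n}]\big]$; - $(\{\hat{\mathcal{H}}'\}_{l,l'})_{a,c}=\mathbb{E}\big[\mathbb{E}_n[\sum_{m}(g^{(n)}_l)_{a,m}(g^{(n)}_{l'})_{c,m}]\big]$;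 - $(\{\hat{\mathcal{H}}''\}_{l,l'})_{a,c}=\mathbb{E}\big[\mathbb{E}_n[(\sum_{m}(g^{(n)}_l)_{a,m})(\sum_{m}(g^{(n)}_{l'})_{c,m})]\big]$. For block matrices $P,Q$ with the same block layout, the Khatri–Rao product $P*Q$ is the block matrix with blocks $\{P*Q\}_{l,l'}=\{P\}_{l,l'}\otimes\{Q\}_{l,l'}$, where $\otimes$ is the Kronecker product. *)

theory Defs
  imports "HOL-Probability.Probability"
begin

definition En :: "nat \<Rightarrow> (nat \<Rightarrow> real) \<Rightarrow> real" where
  "En N f = (\<Sum>n<N. f n) / real N"

text \<open>Activations: abar j w b n is the entry (b,n) of the random matrix \<open>\<bar>a_j\<close>
  (rows b = 0..C j, columns n = 0..N-1) at sample point w.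
  Gradients: g n l w a m is the entry (a,m) of \<open>g^(n)_l\<close> at w.
  Layers l range over 1..L; blocks are indexed by (l,l').\<close>

definition Abar_blk :: "'w measure \<Rightarrow> nat \<Rightarrow> (nat \<Rightarrow> 'w \<Rightarrow> nat \<Rightarrow> nat \<Rightarrow> real)
    \<Rightarrow> nat \<Rightarrow> nat \<Rightarrow> nat \<Rightarrow> nat \<Rightarrow> real" where
  "Abar_blk M N abar l l' b d =
     integral\<^sup>L M (\<lambda>w. En N (\<lambda>n. abar (l - 1) w b n * abar (l' - 1) w d n))"

definition Abar'_blk :: "'w measure \<Rightarrow> nat \<Rightarrow> (nat \<Rightarrow> 'w \<Rightarrow> nat \<Rightarrow> nat \<Rightarrow> real)
    \<Rightarrow> nat \<Rightarrow> nat \<Rightarrow> nat \<Rightarrow> nat \<Rightarrow> real" where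
  "Abar'_blk M N abar l l' b d =
     integral\<^sup>L M (\<lambda>w. En N (\<lambda>n. abar (l - 1) w b n) * En N (\<lambda>n. abar (l' - 1) w d n))"

definition H'_blk :: "'w measure \<Rightarrow> nat \<Rightarrow> (nat \<Rightarrow> nat \<Rightarrow> 'w \<Rightarrow> nat \<Rightarrow> nat \<Rightarrow> real)
    \<Rightarrow> nat \<Rightarrow> nat \<Rightarrow> nat \<Rightarrow> nat \<Rightarrow> real" where
  "H'_blk M N g l l' a c =
     integral\<^sup>L M (\<lambda>w. En N (\<lambda>n. \<Sum>m<N. g n l w a m * g n l' w c m))"

definition H''_blk :: "'w measure \<Rightarrow> nat \<Rightarrow> (nat \<Rightarrow> nat \<Rightarrow> 'w \<Rightarrow> nat \<Rightarrow> nat \<Rightarrow> real)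
    \<Rightarrow> nat \<Rightarrow> nat \<Rightarrow> nat \<Rightarrow> nat \<Rightarrow> real" where
  "H''_blk M N g l l' a c =
     integral\<^sup>L M (\<lambda>w. En N (\<lambda>n. (\<Sum>m<N. g n l w a m) * (\<Sum>m<N. g n l' w c m)))"

text \<open>Row/column index set of the block matrices P * Q: triples (l,b,a) with l in 1..L,
  b a row index of the A-type block (0..C(l-1)), a a row index of the H-type block (0..C l - 1).\<close>
definition kr_index :: "(nat \<Rightarrow> nat) \<Rightarrow> nat \<Rightarrow> (nat \<times> nat \<times> nat) set" where
  "kr_index C L = {(l, b, a). 1 \<le> l \<and> l \<le> L \<and> b \<le> C (l - 1) \<and> a < C l}"

text \<open>Khatri-Rao product: block (l,l') is the Kronecker product of the (l,l') blocks;
  the entry ((b,a),(d,c)) of a Kronecker product P\<otimes>Q is P(b,d) * Q(a,c).\<close>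
definition khatri_rao :: "(nat \<Rightarrow> nat \<Rightarrow> nat \<Rightarrow> nat \<Rightarrow> real) \<Rightarrow> (nat \<Rightarrow> nat \<Rightarrow> nat \<Rightarrow> nat \<Rightarrow> real)
    \<Rightarrow> nat \<times> nat \<times> nat \<Rightarrow> nat \<times> nat \<times> nat \<Rightarrow> real" where
  "khatri_rao P Q = (\<lambda>(l, b, a) (l', d, c). P l l' b d * Q l l' a c)"

definition psd_on :: "'i set \<Rightarrow> ('i \<Rightarrow> 'i \<Rightarrow> real) \<Rightarrow> bool" where
  "psd_on I K \<longleftrightarrow> (\<forall>i\<in>I. \<forall>j\<in>I. K i j = K j i) \<and>
     (\<forall>v :: 'i \<Rightarrow> real. 0 \<le> (\<Sum>i\<in>I. \<Sum>j\<in>I. v i * K i j * v j))"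

end

theory Submission
  imports Defs
begin

text \<open>Contracting the
  per-sample kernel with a vector \<open>v\<close> turns each of the four products of moments into a sum of
  squares of partial sums of one tensor \<open>x k n m = \<Sum>\<^sub>i v\<^sub>i \<alpha>\<^sub>n(i) \<gamma>\<^sub>k\<^sub>m(i)\<close>. For each gradient index \<open>k\<close>
  the combination with weight \<open>c = 1/max(N-1,1)\<close> is nonnegative by the double-centering inequality
  \<open>N \<Sum>\<^sub>m (\<Sum>\<^sub>n x)\<^sup>2 + N \<Sum>\<^sub>n (\<Sum>\<^sub>m x)\<^sup>2 \<le> N\<^sup>2 \<Sum> x\<^sup>2 + (\<Sum> x)\<^sup>2\<close>, which is Cauchy-Schwarz for the
  column sums of the row-centred matrix. Finally, a Khatri-Rao product of expectations is the
  expectation of the per-sample kernel over two independent draws \<open>\<omega>, \<omega>'\<close>, so it inherits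
  positive semi-definiteness.\<close>

lemma sum_weighted_sum_swap:
  "(\<Sum>i\<in>I. v i * (\<Sum>n\<in>A. f n i)) = (\<Sum>n\<in>A. \<Sum>i\<in>I. v i * f n i)"
  for v :: "'i \<Rightarrow> real"
  unfolding sum_distrib_left by (rule sum.swap)

lemma double_centering_inequality:
  fixes x :: "'a \<Rightarrow> 'b \<Rightarrow> real"
  assumes "finite A" "finite B"
  shows "real (card B) * (\<Sum>m\<in>B. (\<Sum>n\<in>A. x n m)\<^sup>2) + real (card A) * (\<Sum>n\<in>A. (\<Sum>m\<in>B. x n m)\<^sup>2)
    \<le> real (card A) * real (card B) * (\<Sum>n\<in>A. \<Sum>m\<in>B. (x n m)\<^sup>2) + (\<Sum>n\<in>A. \<Sum>m\<in>B. x n m)\<^sup>2"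
proof (cases "B = {}")
  case True then show ?thesis by simp
next
  case False
  define b where "b = real (card B)"
  have b: "b > 0" using False assms(2) by (simp add: b_def card_gt_0_iff)
  define R where "R n = (\<Sum>m\<in>B. x n m)" for n
  define S where "S = (\<Sum>n\<in>A. R n)"
  define y where "y n m = x n m - R n / b" for n m
  have row: "(\<Sum>m\<in>B. (y n m)\<^sup>2) = (\<Sum>m\<in>B. (x n m)\<^sup>2) - (R n)\<^sup>2 / b" for n
  proof -
    have "(\<Sum>m\<in>B. (y n m)\<^sup>2) = (\<Sum>m\<in>B. (x n m)\<^sup>2 - 2 * (R n / b) * x n m + (R n / b)\<^sup>2)"
      by (simp add: y_def power2_diff algebra_simps)
    also have "\<dots> = (\<Sum>m\<in>B. (x n m)\<^sup>2) - 2 * (R n / b) * R n + b * (R n / b)\<^sup>2"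
      by (simp add: sum.distrib sum_subtractf b_def R_def sum_distrib_left)
    finally show ?thesis using b by (simp add: power2_eq_square field_simps)
  qed
  define K where "K m = (\<Sum>n\<in>A. x n m)" for m
  have col: "(\<Sum>n\<in>A. y n m) = K m - S / b" for m
    by (simp add: y_def sum_subtractf K_def S_def sum_divide_distrib)
  have sum_K: "(\<Sum>m\<in>B. K m) = S"
    by (simp add: K_def S_def R_def sum.swap[of _ B A])
  have col_sq: "(\<Sum>m\<in>B. (\<Sum>n\<in>A. y n m)\<^sup>2) = (\<Sum>m\<in>B. (K m)\<^sup>2) - S\<^sup>2 / b"
  proof -
    have "(\<Sum>m\<in>B. (\<Sum>n\<in>A. y n m)\<^sup>2) = (\<Sum>m\<in>B. (K m)\<^sup>2 - 2 * (S / b) * K m + (S / b)\<^sup>2)"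
      by (simp add: col power2_diff algebra_simps)
    also have "\<dots> = (\<Sum>m\<in>B. (K m)\<^sup>2) - 2 * (S / b) * S + b * (S / b)\<^sup>2"
      by (simp add: sum.distrib sum_subtractf b_def flip: sum_K sum_distrib_left sum_divide_distrib)
    finally show ?thesis using b by (simp add: power2_eq_square field_simps)
  qed
  have "(\<Sum>m\<in>B. (\<Sum>n\<in>A. y n m)\<^sup>2) \<le> (\<Sum>m\<in>B. real (card A) * (\<Sum>n\<in>A. (y n m)\<^sup>2))"
    using sum_squared_le_sum_of_squares by (intro sum_mono) (simp add: mult.commute)
  also have "\<dots> = real (card A) * (\<Sum>n\<in>A. \<Sum>m\<in>B. (y n m)\<^sup>2)"
    by (simp add: sum_distrib_left sum.swap[of _ B A])
  finally have "(\<Sum>m\<in>B. (K m)\<^sup>2) - S\<^sup>2 / b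
      \<le> real (card A) * ((\<Sum>n\<in>A. \<Sum>m\<in>B. (x n m)\<^sup>2) - (\<Sum>n\<in>A. (R n)\<^sup>2) / b)"
    unfolding col_sq row by (simp add: sum_subtractf sum_divide_distrib)
  then have "b * ((\<Sum>m\<in>B. (K m)\<^sup>2) - S\<^sup>2 / b)
      \<le> b * (real (card A) * ((\<Sum>n\<in>A. \<Sum>m\<in>B. (x n m)\<^sup>2) - (\<Sum>n\<in>A. (R n)\<^sup>2) / b))"
    using b by simp
  then show ?thesis
    using b by (simp add: K_def R_def S_def b_def right_diff_distrib algebra_simps)
qed

lemma double_centering_combination_nonneg:
  fixes x :: "nat \<Rightarrow> nat \<Rightarrow> real" and c :: real
  assumes N: "N \<ge> 1" and c_nonneg: "0 \<le> c" and c_le: "c * (real N - 1) \<le> 1"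
  shows "0 \<le> (1 + c) * (\<Sum>n<N. \<Sum>m<N. (x n m)\<^sup>2) + c * (\<Sum>n<N. \<Sum>m<N. x n m)\<^sup>2
    - c * (\<Sum>m<N. (\<Sum>n<N. x n m)\<^sup>2) - c * (\<Sum>n<N. (\<Sum>m<N. x n m)\<^sup>2)"
proof -
  define Q where "Q = (\<Sum>n<N. \<Sum>m<N. (x n m)\<^sup>2)"
  define S where "S = (\<Sum>n<N. \<Sum>m<N. x n m)"
  define T where "T = (\<Sum>m<N. (\<Sum>n<N. x n m)\<^sup>2) + (\<Sum>n<N. (\<Sum>m<N. x n m)\<^sup>2)"
  have "real N * T \<le> real N * real N * Q + S\<^sup>2"
    using double_centering_inequality[of "{..<N}" "{..<N}" x]
    by (simp add: T_def Q_def S_def distrib_left)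
  moreover have "S\<^sup>2 \<le> real N * S\<^sup>2" using mult_right_mono[of 1 "real N" "S\<^sup>2"] N by simp
  ultimately have "real N * T \<le> real N * (real N * Q + S\<^sup>2)"
    by (simp add: algebra_simps)
  then have "T \<le> real N * Q + S\<^sup>2" using N by simp
  then have "c * T \<le> c * (real N * Q + S\<^sup>2)" using c_nonneg by (rule mult_left_mono)
  moreover have "c * (real N - 1) * Q \<le> Q"
    using mult_right_mono[OF c_le] by (simp add: Q_def sum_nonneg)
  ultimately show ?thesis
    unfolding Q_def[symmetric] S_def[symmetric] by (simp add: T_def algebra_simps)
qed

definition quad_form :: "'i set \<Rightarrow> ('i \<Rightarrow> real) \<Rightarrow> ('i \<Rightarrow> 'i \<Rightarrow> real) \<Rightarrow> real" where
  "quad_form I v K = (\<Sum>i\<in>I. \<Sum>j\<in>I. v i * K i j * v j)"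

lemma psd_on_iff_quad_form:
  "psd_on I K \<longleftrightarrow> (\<forall>i\<in>I. \<forall>j\<in>I. K i j = K j i) \<and> (\<forall>v. 0 \<le> quad_form I v K)"
  by (simp add: psd_on_def quad_form_def)

lemma quad_form_cong:
  "(\<And>i j. i \<in> I \<Longrightarrow> j \<in> I \<Longrightarrow> K i j = K' i j) \<Longrightarrow> quad_form I v K = quad_form I v K'"
  unfolding quad_form_def by (intro sum.cong refl) simp

lemma quad_form_divide:
  "quad_form I v (\<lambda>i j. K i j / d) = quad_form I v K / d"
  by (simp add: quad_form_def sum_divide_distrib)

lemma quad_form_sum:
  "quad_form I v (\<lambda>i j. \<Sum>p\<in>P. K p i j) = (\<Sum>p\<in>P. quad_form I v (K p))"
proof -
  have "quad_form I v (\<lambda>i j. \<Sum>p\<in>P. K p i j) = (\<Sum>i\<in>I. \<Sum>j\<in>I. \<Sum>p\<in>P. v i * K p i j * v j)"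
    by (simp add: quad_form_def sum_distrib_left sum_distrib_right)
  also have "\<dots> = (\<Sum>i\<in>I. \<Sum>p\<in>P. \<Sum>j\<in>I. v i * K p i j * v j)"
    by (intro sum.cong refl sum.swap)
  also have "\<dots> = (\<Sum>p\<in>P. quad_form I v (K p))"
    unfolding quad_form_def by (rule sum.swap)
  finally show ?thesis .
qed

lemma quad_form_rank_one:
  "quad_form I v (\<lambda>i j. u i * u j) = (\<Sum>i\<in>I. v i * u i)\<^sup>2"
  by (simp add: quad_form_def power2_eq_square sum_product mult_ac)

lemma quad_form_integral:
  fixes K :: "'i \<Rightarrow> 'i \<Rightarrow> 'w \<Rightarrow> real"
  assumes "\<And>i j. i \<in> I \<Longrightarrow> j \<in> I \<Longrightarrow> integrable M (K i j)"
  shows "quad_form I v (\<lambda>i j. integral\<^sup>L M (K i j)) = (\<integral>w. quad_form I v (\<lambda>i j. K i j w) \<partial>M)"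
  using assms by (simp add: quad_form_def)

text \<open>Integrands of the blocks of \<open>A\<close>, \<open>A'\<close>, \<open>H'\<close>, \<open>H''\<close> at a fixed sample point, with the
  row indices of both Kronecker factors merged into one index \<open>i\<close>: \<open>\<alpha> n i\<close> is the activation
  entry in mini-batch column \<open>n\<close>, and \<open>\<gamma> k m i\<close> the gradient of example \<open>k\<close>'s loss in column \<open>m\<close>.\<close>

definition act_moment :: "nat \<Rightarrow> (nat \<Rightarrow> 'i \<Rightarrow> real) \<Rightarrow> 'i \<Rightarrow> 'i \<Rightarrow> real" where
  "act_moment N \<alpha> i j = En N (\<lambda>n. \<alpha> n i * \<alpha> n j)"

definition act_mean_moment :: "nat \<Rightarrow> (nat \<Rightarrow> 'i \<Rightarrow> real) \<Rightarrow> 'i \<Rightarrow> 'i \<Rightarrow> real" where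
  "act_mean_moment N \<alpha> i j = En N (\<lambda>n. \<alpha> n i) * En N (\<lambda>n. \<alpha> n j)"

definition grad_moment :: "nat \<Rightarrow> (nat \<Rightarrow> nat \<Rightarrow> 'i \<Rightarrow> real) \<Rightarrow> 'i \<Rightarrow> 'i \<Rightarrow> real" where
  "grad_moment N \<gamma> i j = En N (\<lambda>k. \<Sum>m<N. \<gamma> k m i * \<gamma> k m j)"

definition grad_sum_moment :: "nat \<Rightarrow> (nat \<Rightarrow> nat \<Rightarrow> 'i \<Rightarrow> real) \<Rightarrow> 'i \<Rightarrow> 'i \<Rightarrow> real" where
  "grad_sum_moment N \<gamma> i j = En N (\<lambda>k. (\<Sum>m<N. \<gamma> k m i) * (\<Sum>m<N. \<gamma> k m j))"

lemma moment_kernels_sym: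
  "act_moment N \<alpha> i j = act_moment N \<alpha> j i"
  "act_mean_moment N \<alpha> i j = act_mean_moment N \<alpha> j i"
  "grad_moment N \<gamma> i j = grad_moment N \<gamma> j i"
  "grad_sum_moment N \<gamma> i j = grad_sum_moment N \<gamma> j i"
  by (simp_all add: act_moment_def act_mean_moment_def grad_moment_def grad_sum_moment_def mult.commute)

lemma act_moment_mult_grad_moment:
  "act_moment N \<alpha> i j * grad_moment N \<gamma> i j
    = (\<Sum>k<N. \<Sum>n<N. \<Sum>m<N. (\<alpha> n i * \<gamma> k m i) * (\<alpha> n j * \<gamma> k m j)) / (real N)\<^sup>2"
proof -
  have "(\<Sum>k<N. \<Sum>n<N. \<Sum>m<N. (\<alpha> n i * \<gamma> k m i) * (\<alpha> n j * \<gamma> k m j))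
      = (\<Sum>k<N. \<Sum>m<N. \<Sum>n<N. (\<alpha> n i * \<alpha> n j) * (\<gamma> k m i * \<gamma> k m j))"
    by (rule sum.cong[OF refl], subst sum.swap) (simp add: mult_ac)
  also have "\<dots> = (\<Sum>n<N. \<alpha> n i * \<alpha> n j) * (\<Sum>k<N. \<Sum>m<N. \<gamma> k m i * \<gamma> k m j)"
    unfolding sum_distrib_right sum_distrib_left ..
  finally show ?thesis
    by (simp add: act_moment_def grad_moment_def En_def power2_eq_square)
qed

lemma act_mean_moment_mult_grad_sum_moment:
  "act_mean_moment N \<alpha> i j * grad_sum_moment N \<gamma> i j
    = (\<Sum>k<N. (\<Sum>n<N. \<Sum>m<N. \<alpha> n i * \<gamma> k m i) * (\<Sum>n<N. \<Sum>m<N. \<alpha> n j * \<gamma> k m j)) / real N ^ 3"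
proof -
  define A B where "A = (\<Sum>n<N. \<alpha> n i)" and "B = (\<Sum>n<N. \<alpha> n j)"
  define G H where "G k = (\<Sum>m<N. \<gamma> k m i)" and "H k = (\<Sum>m<N. \<gamma> k m j)" for k
  have "(\<Sum>k<N. (\<Sum>n<N. \<Sum>m<N. \<alpha> n i * \<gamma> k m i) * (\<Sum>n<N. \<Sum>m<N. \<alpha> n j * \<gamma> k m j))
      = (\<Sum>k<N. (A * G k) * (B * H k))"
    unfolding A_def B_def G_def H_def sum_product ..
  also have "\<dots> = A * B * (\<Sum>k<N. G k * H k)"
    by (simp add: sum_distrib_left mult_ac)
  finally show ?thesis
    by (simp add: act_mean_moment_def grad_sum_moment_def En_def A_def B_def G_def H_def power3_eq_cube)
qed

lemma act_moment_mult_grad_sum_moment: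
  "act_moment N \<alpha> i j * grad_sum_moment N \<gamma> i j
    = (\<Sum>k<N. \<Sum>n<N. (\<Sum>m<N. \<alpha> n i * \<gamma> k m i) * (\<Sum>m<N. \<alpha> n j * \<gamma> k m j)) / (real N)\<^sup>2"
proof -
  define G H where "G k = (\<Sum>m<N. \<gamma> k m i)" and "H k = (\<Sum>m<N. \<gamma> k m j)" for k
  have "(\<Sum>k<N. \<Sum>n<N. (\<Sum>m<N. \<alpha> n i * \<gamma> k m i) * (\<Sum>m<N. \<alpha> n j * \<gamma> k m j))
      = (\<Sum>k<N. \<Sum>n<N. (\<alpha> n i * G k) * (\<alpha> n j * H k))"
    unfolding G_def H_def sum_distrib_left ..
  also have "\<dots> = (\<Sum>n<N. \<Sum>k<N. (\<alpha> n i * \<alpha> n j) * (G k * H k))"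
    by (subst sum.swap) (simp add: mult_ac)
  also have "\<dots> = (\<Sum>n<N. \<alpha> n i * \<alpha> n j) * (\<Sum>k<N. G k * H k)"
    unfolding sum_product ..
  finally show ?thesis
    by (simp add: act_moment_def grad_sum_moment_def En_def G_def H_def power2_eq_square)
qed

lemma act_mean_moment_mult_grad_moment:
  "act_mean_moment N \<alpha> i j * grad_moment N \<gamma> i j
    = (\<Sum>k<N. \<Sum>m<N. (\<Sum>n<N. \<alpha> n i * \<gamma> k m i) * (\<Sum>n<N. \<alpha> n j * \<gamma> k m j)) / real N ^ 3"
proof -
  define A B where "A = (\<Sum>n<N. \<alpha> n i)" and "B = (\<Sum>n<N. \<alpha> n j)"
  have "(\<Sum>k<N. \<Sum>m<N. (\<Sum>n<N. \<alpha> n i * \<gamma> k m i) * (\<Sum>n<N. \<alpha> n j * \<gamma> k m j))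
      = (\<Sum>k<N. \<Sum>m<N. (A * \<gamma> k m i) * (B * \<gamma> k m j))"
    unfolding A_def B_def sum_distrib_right ..
  also have "\<dots> = A * B * (\<Sum>k<N. \<Sum>m<N. \<gamma> k m i * \<gamma> k m j)"
    by (simp add: sum_distrib_left mult_ac)
  finally show ?thesis
    by (simp add: act_mean_moment_def grad_moment_def En_def A_def B_def power3_eq_cube)
qed

lemma quad_form_act_moment_grad_moment:
  "quad_form I v (\<lambda>i j. act_moment N \<alpha> i j * grad_moment N \<gamma> i j)
    = (\<Sum>k<N. \<Sum>n<N. \<Sum>m<N. (\<Sum>i\<in>I. v i * (\<alpha> n i * \<gamma> k m i))\<^sup>2) / (real N)\<^sup>2"
  unfolding act_moment_mult_grad_moment quad_form_divide quad_form_sum quad_form_rank_one ..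

lemma quad_form_act_mean_moment_grad_sum_moment:
  "quad_form I v (\<lambda>i j. act_mean_moment N \<alpha> i j * grad_sum_moment N \<gamma> i j)
    = (\<Sum>k<N. (\<Sum>n<N. \<Sum>m<N. \<Sum>i\<in>I. v i * (\<alpha> n i * \<gamma> k m i))\<^sup>2) / real N ^ 3"
  unfolding act_mean_moment_mult_grad_sum_moment quad_form_divide quad_form_sum quad_form_rank_one
  unfolding sum_weighted_sum_swap ..

lemma quad_form_act_moment_grad_sum_moment:
  "quad_form I v (\<lambda>i j. act_moment N \<alpha> i j * grad_sum_moment N \<gamma> i j)
    = (\<Sum>k<N. \<Sum>n<N. (\<Sum>m<N. \<Sum>i\<in>I. v i * (\<alpha> n i * \<gamma> k m i))\<^sup>2) / (real N)\<^sup>2"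
  unfolding act_moment_mult_grad_sum_moment quad_form_divide quad_form_sum quad_form_rank_one
  unfolding sum_weighted_sum_swap ..

lemma quad_form_act_mean_moment_grad_moment:
  "quad_form I v (\<lambda>i j. act_mean_moment N \<alpha> i j * grad_moment N \<gamma> i j)
    = (\<Sum>k<N. \<Sum>m<N. (\<Sum>n<N. \<Sum>i\<in>I. v i * (\<alpha> n i * \<gamma> k m i))\<^sup>2) / real N ^ 3"
  unfolding act_mean_moment_mult_grad_moment quad_form_divide quad_form_sum quad_form_rank_one
  unfolding sum_weighted_sum_swap ..

lemma quad_form_sample_kernel_nonneg:
  fixes \<alpha> :: "nat \<Rightarrow> 'i \<Rightarrow> real" and \<gamma> :: "nat \<Rightarrow> nat \<Rightarrow> 'i \<Rightarrow> real"
  assumes N: "N \<ge> 1" and c_nonneg: "0 \<le> c" and c_le: "c * (real N - 1) \<le> 1"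
  shows "0 \<le> quad_form I v (\<lambda>i j. act_moment N \<alpha> i j * grad_moment N \<gamma> i j
    + c * ((real N * act_mean_moment N \<alpha> i j - act_moment N \<alpha> i j)
           * (grad_sum_moment N \<gamma> i j - grad_moment N \<gamma> i j)))"
proof -
  define x where "x k n m = (\<Sum>i\<in>I. v i * (\<alpha> n i * \<gamma> k m i))" for k n m
  let ?q = "\<lambda>K. quad_form I v K"
  have "?q (\<lambda>i j. act_moment N \<alpha> i j * grad_moment N \<gamma> i j
      + c * ((real N * act_mean_moment N \<alpha> i j - act_moment N \<alpha> i j)
             * (grad_sum_moment N \<gamma> i j - grad_moment N \<gamma> i j)))
    = (1 + c) * ?q (\<lambda>i j. act_moment N \<alpha> i j * grad_moment N \<gamma> i j)
      + c * real N * ?q (\<lambda>i j. act_mean_moment N \<alpha> i j * grad_sum_moment N \<gamma> i j)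
      - c * real N * ?q (\<lambda>i j. act_mean_moment N \<alpha> i j * grad_moment N \<gamma> i j)
      - c * ?q (\<lambda>i j. act_moment N \<alpha> i j * grad_sum_moment N \<gamma> i j)"
    by (simp add: quad_form_def sum_distrib_left sum.distrib sum_subtractf algebra_simps)
  also have "\<dots> = (\<Sum>k<N. (1 + c) * (\<Sum>n<N. \<Sum>m<N. (x k n m)\<^sup>2) + c * (\<Sum>n<N. \<Sum>m<N. x k n m)\<^sup>2
      - c * (\<Sum>m<N. (\<Sum>n<N. x k n m)\<^sup>2) - c * (\<Sum>n<N. (\<Sum>m<N. x k n m)\<^sup>2)) / (real N)\<^sup>2"
    using N
    unfolding quad_form_act_moment_grad_moment quad_form_act_mean_moment_grad_sum_moment
      quad_form_act_moment_grad_sum_moment quad_form_act_mean_moment_grad_moment x_def[symmetric]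
    by (simp add: sum.distrib sum_subtractf sum_distrib_left power2_eq_square power3_eq_cube field_simps)
  also have "\<dots> \<ge> 0"
    using double_centering_combination_nonneg[OF N c_nonneg c_le]
    by (intro divide_nonneg_nonneg sum_nonneg) auto
  finally show ?thesis .
qed

lemma quad_form_integral_products_nonneg:
  fixes P Q P' Q' :: "'i \<Rightarrow> 'i \<Rightarrow> 'w \<Rightarrow> real"
  assumes int_P: "\<And>i j. i \<in> I \<Longrightarrow> j \<in> I \<Longrightarrow> integrable M (P i j)"
    and int_Q: "\<And>i j. i \<in> I \<Longrightarrow> j \<in> I \<Longrightarrow> integrable M (Q i j)"
    and int_P': "\<And>i j. i \<in> I \<Longrightarrow> j \<in> I \<Longrightarrow> integrable M (P' i j)"
    and int_Q': "\<And>i j. i \<in> I \<Longrightarrow> j \<in> I \<Longrightarrow> integrable M (Q' i j)"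
    and nonneg: "\<And>w w'. w \<in> space M \<Longrightarrow> w' \<in> space M \<Longrightarrow>
      0 \<le> quad_form I v (\<lambda>i j. P i j w * Q i j w' + c * (P' i j w * Q' i j w'))"
  shows "0 \<le> quad_form I v (\<lambda>i j. integral\<^sup>L M (P i j) * integral\<^sup>L M (Q i j)
    + c * (integral\<^sup>L M (P' i j) * integral\<^sup>L M (Q' i j)))"
proof -
  have inner: "0 \<le> quad_form I v (\<lambda>i j. P i j w * integral\<^sup>L M (Q i j)
      + c * (P' i j w * integral\<^sup>L M (Q' i j)))" if w: "w \<in> space M" for w
  proof -
    have "quad_form I v (\<lambda>i j. P i j w * integral\<^sup>L M (Q i j) + c * (P' i j w * integral\<^sup>L M (Q' i j)))
        = quad_form I v (\<lambda>i j. \<integral>w'. P i j w * Q i j w' + c * (P' i j w * Q' i j w') \<partial>M)"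
      using int_Q int_Q' by (intro quad_form_cong) simp
    also have "\<dots> = (\<integral>w'. quad_form I v (\<lambda>i j. P i j w * Q i j w' + c * (P' i j w * Q' i j w')) \<partial>M)"
      using int_Q int_Q' by (intro quad_form_integral) simp
    also have "\<dots> \<ge> 0"
      using nonneg[OF w] by (intro Bochner_Integration.integral_nonneg) simp
    finally show ?thesis .
  qed
  have "quad_form I v (\<lambda>i j. integral\<^sup>L M (P i j) * integral\<^sup>L M (Q i j)
      + c * (integral\<^sup>L M (P' i j) * integral\<^sup>L M (Q' i j)))
    = quad_form I v (\<lambda>i j. \<integral>w. P i j w * integral\<^sup>L M (Q i j) + c * (P' i j w * integral\<^sup>L M (Q' i j)) \<partial>M)"
    using int_P int_P' by (intro quad_form_cong) simp
  also have "\<dots> = (\<integral>w. quad_form I v (\<lambda>i j. P i j w * integral\<^sup>L M (Q i j)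
      + c * (P' i j w * integral\<^sup>L M (Q' i j))) \<partial>M)"
    using int_P int_P' by (intro quad_form_integral) simp
  also have "\<dots> \<ge> 0"
    using inner by (intro Bochner_Integration.integral_nonneg) simp
  finally show ?thesis .
qed

lemma integrable_mult_of_square_integrable:
  fixes f g :: "'w \<Rightarrow> real"
  assumes [measurable]: "f \<in> borel_measurable M" "g \<in> borel_measurable M"
    and "integrable M (\<lambda>w. (f w)\<^sup>2)" "integrable M (\<lambda>w. (g w)\<^sup>2)"
  shows "integrable M (\<lambda>w. f w * g w)"
proof (rule Bochner_Integration.integrable_bound)
  show "integrable M (\<lambda>w. (f w)\<^sup>2 + (g w)\<^sup>2)" using assms(3,4) by simp
  have "\<bar>f w\<bar> * \<bar>g w\<bar> \<le> (f w)\<^sup>2 + (g w)\<^sup>2" for w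
  proof -
    have "0 \<le> \<bar>f w\<bar> * \<bar>g w\<bar>" by simp
    moreover have "2 * (\<bar>f w\<bar> * \<bar>g w\<bar>) \<le> (f w)\<^sup>2 + (g w)\<^sup>2"
      using sum_squares_bound[of "\<bar>f w\<bar>" "\<bar>g w\<bar>"] by (simp add: mult.assoc)
    ultimately show ?thesis by linarith
  qed
  then show "AE w in M. norm (f w * g w) \<le> norm ((f w)\<^sup>2 + (g w)\<^sup>2)"
    by (simp add: abs_mult)
qed measurable

lemma integrable_En:
  "(\<And>n. n < N \<Longrightarrow> integrable M (\<lambda>w. f w n)) \<Longrightarrow> integrable M (\<lambda>w. En N (f w))"
  unfolding En_def by (intro integrable_divide_zero Bochner_Integration.integrable_sum) auto

lemma En_mult_En:
  "En N f * En N g = En N (\<lambda>n. En N (\<lambda>n'. f n * g n'))"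
  by (simp add: En_def sum_product sum_divide_distrib)

lemma integrable_moment_kernels:
  fixes M :: "'w measure" and \<alpha> :: "'w \<Rightarrow> nat \<Rightarrow> 'i \<Rightarrow> real"
    and \<gamma> :: "'w \<Rightarrow> nat \<Rightarrow> nat \<Rightarrow> 'i \<Rightarrow> real"
  assumes \<alpha>_meas: "\<And>i n. i \<in> I \<Longrightarrow> n < N \<Longrightarrow> (\<lambda>w. \<alpha> w n i) \<in> borel_measurable M"
    and \<alpha>_L2: "\<And>i n. i \<in> I \<Longrightarrow> n < N \<Longrightarrow> integrable M (\<lambda>w. (\<alpha> w n i)\<^sup>2)"
    and \<gamma>_meas: "\<And>i k m. i \<in> I \<Longrightarrow> k < N \<Longrightarrow> m < N \<Longrightarrow> (\<lambda>w. \<gamma> w k m i) \<in> borel_measurable M"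
    and \<gamma>_L2: "\<And>i k m. i \<in> I \<Longrightarrow> k < N \<Longrightarrow> m < N \<Longrightarrow> integrable M (\<lambda>w. (\<gamma> w k m i)\<^sup>2)"
    and ij: "i \<in> I" "j \<in> I"
  shows "integrable M (\<lambda>w. act_moment N (\<alpha> w) i j)"
    and "integrable M (\<lambda>w. act_mean_moment N (\<alpha> w) i j)"
    and "integrable M (\<lambda>w. grad_moment N (\<gamma> w) i j)"
    and "integrable M (\<lambda>w. grad_sum_moment N (\<gamma> w) i j)"
proof -
  have \<alpha>\<alpha>: "integrable M (\<lambda>w. \<alpha> w n i * \<alpha> w n' j)" if "n < N" "n' < N" for n n'
    using that ij \<alpha>_meas \<alpha>_L2 by (intro integrable_mult_of_square_integrable) auto
  have \<gamma>\<gamma>: "integrable M (\<lambda>w. \<gamma> w k m i * \<gamma> w k m' j)" if "k < N" "m < N" "m' < N" for k m m'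
    using that ij \<gamma>_meas \<gamma>_L2 by (intro integrable_mult_of_square_integrable) auto
  show "integrable M (\<lambda>w. act_moment N (\<alpha> w) i j)"
    unfolding act_moment_def using \<alpha>\<alpha> by (intro integrable_En) auto
  show "integrable M (\<lambda>w. act_mean_moment N (\<alpha> w) i j)"
    unfolding act_mean_moment_def En_mult_En using \<alpha>\<alpha> by (intro integrable_En) auto
  show "integrable M (\<lambda>w. grad_moment N (\<gamma> w) i j)"
    unfolding grad_moment_def using \<gamma>\<gamma> by (intro integrable_En Bochner_Integration.integrable_sum) auto
  show "integrable M (\<lambda>w. grad_sum_moment N (\<gamma> w) i j)"
    unfolding grad_sum_moment_def sum_product using \<gamma>\<gamma>
    by (intro integrable_En Bochner_Integration.integrable_sum) auto
qed

lemma psd_on_expected_kernel: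
  fixes M :: "'w measure" and \<alpha> :: "'w \<Rightarrow> nat \<Rightarrow> 'i \<Rightarrow> real"
    and \<gamma> :: "'w \<Rightarrow> nat \<Rightarrow> nat \<Rightarrow> 'i \<Rightarrow> real"
  assumes N: "N \<ge> 1"
    and \<alpha>_meas: "\<And>i n. i \<in> I \<Longrightarrow> n < N \<Longrightarrow> (\<lambda>w. \<alpha> w n i) \<in> borel_measurable M"
    and \<alpha>_L2: "\<And>i n. i \<in> I \<Longrightarrow> n < N \<Longrightarrow> integrable M (\<lambda>w. (\<alpha> w n i)\<^sup>2)"
    and \<gamma>_meas: "\<And>i k m. i \<in> I \<Longrightarrow> k < N \<Longrightarrow> m < N \<Longrightarrow> (\<lambda>w. \<gamma> w k m i) \<in> borel_measurable M"
    and \<gamma>_L2: "\<And>i k m. i \<in> I \<Longrightarrow> k < N \<Longrightarrow> m < N \<Longrightarrow> integrable M (\<lambda>w. (\<gamma> w k m i)\<^sup>2)"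
  shows "psd_on I (\<lambda>i j.
      (\<integral>w. act_moment N (\<alpha> w) i j \<partial>M) * (\<integral>w. grad_moment N (\<gamma> w) i j \<partial>M)
    + 1 / real (max (N - 1) 1) *
      ((real N * (\<integral>w. act_mean_moment N (\<alpha> w) i j \<partial>M) - (\<integral>w. act_moment N (\<alpha> w) i j \<partial>M))
     * ((\<integral>w. grad_sum_moment N (\<gamma> w) i j \<partial>M) - (\<integral>w. grad_moment N (\<gamma> w) i j \<partial>M))))"
  unfolding psd_on_iff_quad_form
proof (intro conjI allI)
  fix v
  define c where "c = 1 / real (max (N - 1) 1)"
  have c_nonneg: "0 \<le> c" by (simp add: c_def)
  have c_le: "c * (real N - 1) \<le> 1"
    using N by (cases "N = 1") (auto simp: c_def of_nat_diff)
  note integrable = integrable_moment_kernels[where I = I and N = N and M = M and \<alpha> = \<alpha> and \<gamma> = \<gamma>,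
      OF \<alpha>_meas \<alpha>_L2 \<gamma>_meas \<gamma>_L2]
  have "0 \<le> quad_form I v (\<lambda>i j.
      (\<integral>w. act_moment N (\<alpha> w) i j \<partial>M) * (\<integral>w. grad_moment N (\<gamma> w) i j \<partial>M)
    + c * ((\<integral>w. real N * act_mean_moment N (\<alpha> w) i j - act_moment N (\<alpha> w) i j \<partial>M)
     * (\<integral>w. grad_sum_moment N (\<gamma> w) i j - grad_moment N (\<gamma> w) i j \<partial>M)))"
    using integrable
    by (intro quad_form_integral_products_nonneg quad_form_sample_kernel_nonneg[OF N c_nonneg c_le]) auto
  also have "\<dots> = quad_form I v (\<lambda>i j.
      (\<integral>w. act_moment N (\<alpha> w) i j \<partial>M) * (\<integral>w. grad_moment N (\<gamma> w) i j \<partial>M)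
    + c * ((real N * (\<integral>w. act_mean_moment N (\<alpha> w) i j \<partial>M) - (\<integral>w. act_moment N (\<alpha> w) i j \<partial>M))
     * ((\<integral>w. grad_sum_moment N (\<gamma> w) i j \<partial>M) - (\<integral>w. grad_moment N (\<gamma> w) i j \<partial>M))))"
    using integrable by (intro quad_form_cong) simp
  finally show "0 \<le> \<dots>" unfolding c_def .
qed (simp add: moment_kernels_sym)

theorem theorem3:
  fixes M :: "'w measure" and C :: "nat \<Rightarrow> nat" and L N :: nat
    and abar :: "nat \<Rightarrow> 'w \<Rightarrow> nat \<Rightarrow> nat \<Rightarrow> real"
    and g :: "nat \<Rightarrow> nat \<Rightarrow> 'w \<Rightarrow> nat \<Rightarrow> nat \<Rightarrow> real"
  assumes "prob_space M"
    and "N \<ge> 1"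
    and abar_meas: "\<And>j b n. j < L \<Longrightarrow> b \<le> C j \<Longrightarrow> n < N \<Longrightarrow>
              (\<lambda>w. abar j w b n) \<in> borel_measurable M"
    and abar_L2: "\<And>j b n. j < L \<Longrightarrow> b \<le> C j \<Longrightarrow> n < N \<Longrightarrow>
              integrable M (\<lambda>w. (abar j w b n)\<^sup>2)"
    and abar_ones: "\<And>j w n. j < L \<Longrightarrow> w \<in> space M \<Longrightarrow> n < N \<Longrightarrow> abar j w (C j) n = 1"
    and g_meas: "\<And>n l a m. n < N \<Longrightarrow> 1 \<le> l \<Longrightarrow> l \<le> L \<Longrightarrow> a < C l \<Longrightarrow> m < N \<Longrightarrow>
              (\<lambda>w. g n l w a m) \<in> borel_measurable M"
    and g_L2: "\<And>n l a m. n < N \<Longrightarrow> 1 \<le> l \<Longrightarrow> l \<le> L \<Longrightarrow> a < C l \<Longrightarrow> m < N \<Longrightarrow>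
              integrable M (\<lambda>w. (g n l w a m)\<^sup>2)"
  shows "psd_on (kr_index C L)
     (\<lambda>i j. khatri_rao (Abar_blk M N abar) (H'_blk M N g) i j
        + (1 / real (max (N - 1) 1)) *
          khatri_rao (\<lambda>l l' b d. real N * Abar'_blk M N abar l l' b d - Abar_blk M N abar l l' b d)
                     (\<lambda>l l' a c. H''_blk M N g l l' a c - H'_blk M N g l l' a c) i j)"
proof -
  define \<alpha> where "\<alpha> w n i = abar (fst i - 1) w (fst (snd i)) n"
    for w n and i :: "nat \<times> nat \<times> nat"
  define \<gamma> where "\<gamma> w k m i = g k (fst i) w (snd (snd i)) m"
    for w k m and i :: "nat \<times> nat \<times> nat"
  have "psd_on (kr_index C L) (\<lambda>i j.
      (\<integral>w. act_moment N (\<alpha> w) i j \<partial>M) * (\<integral>w. grad_moment N (\<gamma> w) i j \<partial>M)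
    + 1 / real (max (N - 1) 1) *
      ((real N * (\<integral>w. act_mean_moment N (\<alpha> w) i j \<partial>M) - (\<integral>w. act_moment N (\<alpha> w) i j \<partial>M))
     * ((\<integral>w. grad_sum_moment N (\<gamma> w) i j \<partial>M) - (\<integral>w. grad_moment N (\<gamma> w) i j \<partial>M))))"
    using \<open>N \<ge> 1\<close> by (intro psd_on_expected_kernel)
      (auto simp: \<alpha>_def \<gamma>_def kr_index_def intro!: abar_meas abar_L2 g_meas g_L2)
  then show ?thesis
    by (simp add: \<alpha>_def \<gamma>_def khatri_rao_def Abar_blk_def Abar'_blk_def H'_blk_def H''_blk_def
        act_moment_def act_mean_moment_def grad_moment_def grad_sum_moment_def split_def)
qed

end
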